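(* Let $(C^\gamma_{\alpha\beta},\eta,e)$ be a semisimple Frobenius manifold on $\mathcal U\subset\mathbb C^n$ with operators $L_\alpha=\partial/\partial x^\alpha-\hbar^{-1}C_\alpha(x)$, and let $A_1(x),\dots,A_m(x)$ be $Mat(n,\mathbb C)$-valued functions on $\mathcal U$ such that for all $\alpha$ the commutator $[\sum_{j=1}^m\hbar^{-j}A_j(x),L_\alpha]$ lies in $\hbar^{-1}Mat(n,\mathbb C)$ (i.e. is $\hbar^{-1}$ times a matrix-valued function of $x$). Then $\sum_{j=1}^m\hbar^{-j}A_j(x)=\varphi(b)_{\le-1}$ for some $b=\sum_{j=1}^mb_j\hbar^{-j}$ with $b_j$ diagonal-matrix-valued, and $b_j$ is constant for $j>1$.
   Context: Frobenius manifold in flat coordinates $x^\alpha$: analytic $C^\gamma_{\alpha\beta}(x)$, constant nondegenerate symmetric $\eta_{\alpha\beta}$, product $\partial_\alpha\circ\partial_\beta=\sum_\gamma C^\gamma_{\alpha\beta}\partial_\gamma$ commutative associative with unit $\partial/\partial x^1$, $\eta$ invariant, $(C_\alpha)^\gamma_\beta=C^\gamma_{\alpha\beta}$, and the $L_\alpha$ pairwise commute. Semisimple: $T_x\mathcal U=\oplus_i\theta_i$ with one-dimensional common eigenspaces of all multiplication operators. $\varphi(b)=TbT^{-1}$, where $T(\hbar,x)\in Mat(n,\mathbb C)[[\hbar]]$ is an invertible dressing transformation: $T^{-1}L_\alpha T=\partial/\partial x^\alpha+h_\alpha$ with $h_\alpha\in\hbar^{-1}Diag[[\hbar]]$ for all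 $\alpha$ ($Diag$ = diagonal matrices); such $T$ exists and is unique up to right multiplication by diagonal series. For a Laurent series $v=\sum_lv_l\hbar^l$, $v_{\le k}=\sum_{l\le k}v_l\hbar^l$. $[\partial_\alpha-\hbar^{-1}C_\alpha,M]=\partial_\alpha M-\hbar^{-1}[C_\alpha,M]$. *)

theory Defs
  imports "HOL-Analysis.Analysis"
begin

text \<open>Points of the chart domain U are vectors in complex^'n (flat coordinates x^alpha,
  indexed by the finite type 'n). Matrices are complex^'n^'n; entry M $ g $ b is M^g_b.\<close>

text \<open>Holomorphic scalar function on an open set: complex-Frechet differentiable.\<close>
definition holo_on :: "(complex^'n::finite) set \<Rightarrow> (complex^'n \<Rightarrow> complex) \<Rightarrow> bool" where
  "holo_on U g \<longleftrightarrow> (\<forall>x\<in>U. \<exists>L. (g has_derivative L) (at x) \<and>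
      (\<forall>v. L (\<chi> i. \<i> * v $ i) = \<i> * L v))"

definition mholo_on :: "(complex^'n::finite) set \<Rightarrow> (complex^'n \<Rightarrow> complex^'n^'n) \<Rightarrow> bool" where
  "mholo_on U M \<longleftrightarrow> (\<forall>i j. holo_on U (\<lambda>y. M y $ i $ j))"

definition pdc :: "'n::finite \<Rightarrow> (complex^'n \<Rightarrow> complex) \<Rightarrow> complex^'n \<Rightarrow> complex" where
  "pdc a g x = deriv (\<lambda>t. g (x + (\<chi> i. if i = a then t else 0))) 0"

definition pdm :: "'n::finite \<Rightarrow> (complex^'n \<Rightarrow> complex^'n^'n) \<Rightarrow> complex^'n \<Rightarrow> complex^'n^'n" where
  "pdm a M x = (\<chi> i j. pdc a (\<lambda>y. M y $ i $ j) x)"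

definition diagm :: "complex^'n::finite \<Rightarrow> complex^'n^'n" where
  "diagm v = (\<chi> i j. if i = j then v $ i else 0)"

definition is_diag :: "complex^'n::finite^'n \<Rightarrow> bool" where
  "is_diag M \<longleftrightarrow> (\<forall>i j. i \<noteq> j \<longrightarrow> M $ i $ j = 0)"

text \<open>Laurent series in hbar with x-dependent matrix coefficients:
  S k x is the coefficient of hbar^k at the point x.\<close>
type_synonym ('n) mser = "int \<Rightarrow> complex^'n \<Rightarrow> complex^'n^'n"

text \<open>Cauchy product (meaningful for series bounded below, where the index set is finite).\<close>
definition lmul :: "('n::finite) mser \<Rightarrow> 'n mser \<Rightarrow> 'n mser" where
  "lmul a b k x = (\<Sum>i\<in>{i. a i x \<noteq> 0 \<and> b (k - i) x \<noteq> 0}. a i x ** b (k - i) x)"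

definition lone :: "('n::finite) mser" where
  "lone k x = (if k = 0 then mat 1 else 0)"

definition pdser :: "'n::finite \<Rightarrow> 'n mser \<Rightarrow> 'n mser" where
  "pdser a S k = pdm a (S k)"

definition cser :: "('n::finite \<Rightarrow> complex^'n \<Rightarrow> complex^'n^'n) \<Rightarrow> 'n \<Rightarrow> 'n mser" where
  "cser C a k x = (if k = -1 then C a x else 0)"

text \<open>The series sum_{j=1}^m hbar^{-j} A_j(x).\<close>
definition negser :: "nat \<Rightarrow> (nat \<Rightarrow> complex^'n::finite \<Rightarrow> complex^'n^'n) \<Rightarrow> 'n mser" where
  "negser m A k x = (if - int m \<le> k \<and> k \<le> -1 then A (nat (- k)) x else 0)"

text \<open>Frobenius manifold in flat coordinates on U; C a x $ g $ b = C^g_{a b}(x),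
  the unit vector field is d/dx^e, eta is the constant metric.\<close>
definition frobenius :: "(complex^'n::finite) set \<Rightarrow> ('n \<Rightarrow> complex^'n \<Rightarrow> complex^'n^'n)
    \<Rightarrow> complex^'n^'n \<Rightarrow> 'n \<Rightarrow> bool" where
  "frobenius U C eta e \<longleftrightarrow>
     (\<forall>a. mholo_on U (C a)) \<and>
     invertible eta \<and> transpose eta = eta \<and>
     (\<forall>x\<in>U. \<forall>a b g. C a x $ g $ b = C b x $ g $ a) \<and>
     (\<forall>x\<in>U. \<forall>a b c t. (\<Sum>s\<in>UNIV. C a x $ s $ b * C s x $ t $ c)
                      = (\<Sum>s\<in>UNIV. C b x $ s $ c * C a x $ t $ s)) \<and>
     (\<forall>x\<in>U. \<forall>b g. C e x $ g $ b = (if g = b then 1 else 0)) \<and>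
     (\<forall>x\<in>U. \<forall>a b c. (\<Sum>s\<in>UNIV. C a x $ s $ b * eta $ s $ c)
                    = (\<Sum>s\<in>UNIV. C b x $ s $ c * eta $ a $ s))"

text \<open>[L_a, L_b] = 0 for L_a = d_a - hbar^{-1} C_a, written out coefficientwise in hbar:
  the hbar^{-1} part d_a C_b - d_b C_a and the hbar^{-2} part [C_a, C_b] vanish.\<close>
definition L_commute :: "(complex^'n::finite) set \<Rightarrow> ('n \<Rightarrow> complex^'n \<Rightarrow> complex^'n^'n) \<Rightarrow> bool" where
  "L_commute U C \<longleftrightarrow> (\<forall>x\<in>U. \<forall>a b.
      C a x ** C b x = C b x ** C a x \<and> pdm a (C b) x = pdm b (C a) x)"

text \<open>Semisimplicity: the tangent space is the direct sum of one-dimensional common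
  eigenspaces of all multiplication operators C_a(x).\<close>
definition semisimple :: "(complex^'n::finite) set \<Rightarrow> ('n \<Rightarrow> complex^'n \<Rightarrow> complex^'n^'n) \<Rightarrow> bool" where
  "semisimple U C \<longleftrightarrow> (\<forall>x\<in>U. \<exists>(P :: complex^'n^'n) lam. invertible P \<and>
      (\<forall>a. C a x ** P = P ** diagm (lam a)) \<and>
      (\<forall>i j. i \<noteq> j \<longrightarrow> (\<exists>a. lam a $ i \<noteq> lam a $ j)))"

text \<open>Dressing transformation: T in Mat[[hbar]] (holomorphic coefficients in x), invertible in
  Mat[[hbar]] with inverse Tinv, and T^{-1} L_a T = d_a + h_a with h_a in hbar^{-1} Diag[[hbar]].\<close>
definition dressing :: "(complex^'n::finite) set \<Rightarrow> ('n \<Rightarrow> complex^'n \<Rightarrow> complex^'n^'n)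
    \<Rightarrow> 'n mser \<Rightarrow> 'n mser \<Rightarrow> bool" where
  "dressing U C T Tinv \<longleftrightarrow>
     (\<forall>k x. k < 0 \<longrightarrow> T k x = 0 \<and> Tinv k x = 0) \<and>
     (\<forall>k. mholo_on U (T k)) \<and>
     (\<forall>k. \<forall>x\<in>U. lmul T Tinv k x = lone k x \<and> lmul Tinv T k x = lone k x) \<and>
     (\<forall>a. \<exists>h :: 'n mser. (\<forall>k x. k < -1 \<longrightarrow> h k x = 0) \<and> (\<forall>k. \<forall>x\<in>U. is_diag (h k x)) \<and>
        (\<forall>k. \<forall>x\<in>U. lmul Tinv (\<lambda>k' y. pdser a T k' y - lmul (cser C a) T k' y) k x = h k x))"

end

theory Submission
  imports Defs
begin

text \<open>Conjugate by the dressing: Y = T^-1 X T with X = sum_j hbar^-j A_j. Since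
  T^-1 L_a T = d_a + h_a, the hypothesis says that d_a Y - [Y, h_a] has no powers of hbar below
  hbar^-1. The leading coefficients -T_0^-1 C_a T_0 of the h_a are diagonal and, by semisimplicity,
  their entries separate the indices. Comparing off-diagonal entries of the coefficients of hbar^k,
  k <= -2, from the lowest power upwards shows that the negative part of Y is diagonal, and then
  d_a Y_k = 0 for k <= -2. Finally b = Y_(<= -1) works because T, T^-1 and Y - b contain no negative
  powers of hbar.\<close>

section \<open>Laurent series with matrix coefficients\<close>

definition cauchy_mult ::
    "(int \<Rightarrow> complex^'n::finite^'n) \<Rightarrow> (int \<Rightarrow> complex^'n^'n) \<Rightarrow> int \<Rightarrow> complex^'n^'n" where
  "cauchy_mult f g k = (\<Sum>i\<in>{i. f i \<noteq> 0 \<and> g (k - i) \<noteq> 0}. f i ** g (k - i))"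

lemma matrix_add_rdistrib: "(B + C) ** A = B ** A + C ** A"
  by (vector matrix_matrix_mult_def sum.distrib[symmetric] field_simps)

lemma matrix_mult_sum_left: "(\<Sum>i\<in>I. A i) ** B = (\<Sum>i\<in>I. A i ** B)"
  by (induction I rule: infinite_finite_induct) (simp_all add: matrix_add_rdistrib)

lemma matrix_mult_sum_right: "B ** (\<Sum>i\<in>I. A i) = (\<Sum>i\<in>I. B ** A i)"
  by (induction I rule: infinite_finite_induct) (simp_all add: matrix_add_ldistrib)

lemma cauchy_mult_eq_sum:
  assumes "finite I" "\<And>i. f i \<noteq> 0 \<Longrightarrow> g (k - i) \<noteq> 0 \<Longrightarrow> i \<in> I"
  shows "cauchy_mult f g k = (\<Sum>i\<in>I. f i ** g (k - i))"
  unfolding cauchy_mult_def by (rule sum.mono_neutral_left) (use assms in auto)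

lemma cauchy_mult_eq_sum_superset:
  assumes "\<forall>i<p. f i = 0" "\<forall>j<q. g j = 0" "finite I" "{p..k-q} \<subseteq> I"
  shows "cauchy_mult f g k = (\<Sum>i\<in>I. f i ** g (k - i))"
proof (rule cauchy_mult_eq_sum)
  fix i assume "f i \<noteq> 0" "g (k - i) \<noteq> 0"
  then have "\<not> i < p" "\<not> k - i < q" using assms(1,2) by auto
  then show "i \<in> I" using assms(4) by auto
qed (fact assms(3))

lemma cauchy_mult_eq_interval:
  "\<forall>i<p. f i = 0 \<Longrightarrow> \<forall>j<q. g j = 0 \<Longrightarrow>
    cauchy_mult f g k = (\<Sum>i\<in>{p..k-q}. f i ** g (k - i))"
  by (rule cauchy_mult_eq_sum_superset) auto

lemma cauchy_mult_eq_0: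
  assumes "\<forall>i<p. f i = 0" "\<forall>j<q. g j = 0" "k < p + q"
  shows "cauchy_mult f g k = 0"
  using assms(3) by (simp add: cauchy_mult_eq_interval[OF assms(1,2)])

lemma cauchy_mult_assoc:
  assumes f: "\<forall>i<p. f i = 0" and g: "\<forall>j<q. g j = 0" and h: "\<forall>j<r. h j = 0"
  shows "cauchy_mult (cauchy_mult f g) h k = cauchy_mult f (cauchy_mult g h) k"
proof -
  define I where "I = {p..k-q-r}"
  define S where "S = {p+q..k-r}"
  have fg: "\<forall>s<p+q. cauchy_mult f g s = 0" and gh: "\<forall>s<q+r. cauchy_mult g h s = 0"
    using cauchy_mult_eq_0 f g h by blast+
  have "cauchy_mult (cauchy_mult f g) h k = (\<Sum>s\<in>S. cauchy_mult f g s ** h (k - s))"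
    unfolding S_def by (rule cauchy_mult_eq_interval[OF fg h])
  also have "\<dots> = (\<Sum>s\<in>S. \<Sum>i\<in>I. f i ** g (s - i) ** h (k - s))"
    by (intro sum.cong refl, subst cauchy_mult_eq_sum_superset[OF f g, of I])
       (auto simp: I_def S_def matrix_mult_sum_left)
  also have "\<dots> = (\<Sum>i\<in>I. \<Sum>s\<in>S. f i ** g (s - i) ** h (k - s))"
    by (rule sum.swap)
  also have "\<dots> = (\<Sum>i\<in>I. f i ** cauchy_mult g h (k - i))"
  proof (rule sum.cong[OF refl])
    fix i assume i: "i \<in> I"
    have "cauchy_mult g h (k - i) = (\<Sum>j\<in>(\<lambda>s. s - i) ` S. g j ** h (k - i - j))"
      by (rule cauchy_mult_eq_sum_superset[OF g h])
         (use i in \<open>auto simp: I_def S_def image_iff intro!: bexI[where x="_ + i"]\<close>)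
    also have "\<dots> = (\<Sum>s\<in>S. g (s - i) ** h (k - s))"
      by (subst sum.reindex) (auto simp: inj_on_def)
    finally show "(\<Sum>s\<in>S. f i ** g (s - i) ** h (k - s)) = f i ** cauchy_mult g h (k - i)"
      by (simp add: matrix_mult_sum_right matrix_mul_assoc)
  qed
  also have "\<dots> = cauchy_mult f (cauchy_mult g h) k"
    by (simp add: I_def cauchy_mult_eq_interval[OF f gh] diff_diff_eq)
  finally show ?thesis .
qed

lemma cauchy_mult_add_left:
  assumes "\<forall>i<p. f i = 0" "\<forall>i<p. g i = 0" "\<forall>j<q. h j = 0"
  shows "cauchy_mult (\<lambda>i. f i + g i) h k = cauchy_mult f h k + cauchy_mult g h k"
  using assms by (simp add: cauchy_mult_eq_interval[of p _ q] matrix_add_rdistrib sum.distrib)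

lemma cauchy_mult_add_right:
  assumes "\<forall>i<p. f i = 0" "\<forall>j<q. g j = 0" "\<forall>j<q. h j = 0"
  shows "cauchy_mult f (\<lambda>j. g j + h j) k = cauchy_mult f g k + cauchy_mult f h k"
  using assms by (simp add: cauchy_mult_eq_interval[of p _ q] matrix_add_ldistrib sum.distrib)

lemma cauchy_mult_one_left: "cauchy_mult (\<lambda>i. if i = 0 then mat 1 else 0) f k = f k"
  by (subst cauchy_mult_eq_sum[of "{0}"]) (auto split: if_splits)

lemma cauchy_mult_one_right: "cauchy_mult f (\<lambda>i. if i = 0 then mat 1 else 0) k = f k"
  by (subst cauchy_mult_eq_sum[of "{k}"]) (auto split: if_splits)

typedef ('n::finite) laurent = "{f :: int \<Rightarrow> complex^'n^'n. \<exists>p. \<forall>k<p. f k = 0}"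
  morphisms lcoeff Abs_laurent by auto

setup_lifting type_definition_laurent

lemma lcoeff_vanishes_below: "\<exists>p. \<forall>k<p. lcoeff a k = 0"
  using lcoeff by auto

lemma mat_1_neq_0: "mat 1 \<noteq> (0::complex^'n::finite^'n)"
proof
  assume "mat 1 = (0::complex^'n^'n)"
  then have "(mat 1 :: complex^'n^'n) $ undefined $ undefined = 0" by simp
  then show False by (simp add: mat_def)
qed

instantiation laurent :: (finite) ring_1
begin

lift_definition zero_laurent :: "'a laurent" is "\<lambda>k. 0" by auto
lift_definition one_laurent :: "'a laurent" is "\<lambda>k. if k = 0 then mat 1 else 0"
  by (rule exI[of _ 0]) auto
lift_definition plus_laurent :: "'a laurent \<Rightarrow> 'a laurent \<Rightarrow> 'a laurent" is "\<lambda>f g k. f k + g k"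
  by (metis add.right_neutral min.strict_boundedE)
lift_definition minus_laurent :: "'a laurent \<Rightarrow> 'a laurent \<Rightarrow> 'a laurent" is "\<lambda>f g k. f k - g k"
  by (metis diff_zero min.strict_boundedE)
lift_definition uminus_laurent :: "'a laurent \<Rightarrow> 'a laurent" is "\<lambda>f k. - f k" by auto
lift_definition times_laurent :: "'a laurent \<Rightarrow> 'a laurent \<Rightarrow> 'a laurent" is cauchy_mult
  using cauchy_mult_eq_0 by blast

instance
proof
  fix a b c :: "'a laurent"
  obtain p q r where a: "\<forall>k<p. lcoeff a k = 0" and b: "\<forall>k<q. lcoeff b k = 0"
    and c: "\<forall>k<r. lcoeff c k = 0"
    using lcoeff_vanishes_below by metis
  define s where "s = min p (min q r)"
  have a': "\<forall>k<s. lcoeff a k = 0" and b': "\<forall>k<s. lcoeff b k = 0" and c': "\<forall>k<s. lcoeff c k = 0"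
    using a b c by (auto simp: s_def)
  show "a * b * c = a * (b * c)"
    using a b c by transfer (simp add: fun_eq_iff cauchy_mult_assoc)
  show "(a + b) * c = a * c + b * c"
    using a' b' c' by transfer (simp add: fun_eq_iff cauchy_mult_add_left)
  show "a * (b + c) = a * b + a * c"
    using a' b' c' by transfer (simp add: fun_eq_iff cauchy_mult_add_right)
  show "1 * a = a" by transfer (simp add: cauchy_mult_one_left fun_eq_iff)
  show "a * 1 = a" by transfer (simp add: cauchy_mult_one_right fun_eq_iff)
  show "a + b + c = a + (b + c)" by transfer (simp add: algebra_simps)
  show "a + b = b + a" by transfer (simp add: algebra_simps)
  show "0 + a = a" by transfer simp
  show "- a + a = 0" by transfer simp
  show "a - b = a + - b" by transfer simp
  show "(0::'a laurent) \<noteq> 1" by transfer (simp add: fun_eq_iff mat_1_neq_0)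
qed

end

lemma lcoeff_simps [simp]:
  "lcoeff 0 k = 0" "lcoeff 1 k = (if k = 0 then mat 1 else 0)"
  "lcoeff (a + b) k = lcoeff a k + lcoeff b k" "lcoeff (a - b) k = lcoeff a k - lcoeff b k"
  by (transfer, simp)+

lemma lcoeff_mult: "lcoeff (a * b) k = cauchy_mult (lcoeff a) (lcoeff b) k"
  by transfer simp

lemma lcoeff_mult_eq_0:
  "\<forall>i<p. lcoeff a i = 0 \<Longrightarrow> \<forall>j<q. lcoeff b j = 0 \<Longrightarrow> k < p + q \<Longrightarrow> lcoeff (a * b) k = 0"
  by (simp add: lcoeff_mult cauchy_mult_eq_0)

section \<open>Holomorphic functions and partial derivatives\<close>

definition complex_homogeneous :: "(complex^'n::finite \<Rightarrow> complex) \<Rightarrow> bool" where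
  "complex_homogeneous L \<longleftrightarrow> (\<forall>v. L (\<chi> i. \<i> * v $ i) = \<i> * L v)"

lemma holo_onD:
  "holo_on U g \<Longrightarrow> x \<in> U \<Longrightarrow> \<exists>L. (g has_derivative L) (at x) \<and> complex_homogeneous L"
  unfolding holo_on_def complex_homogeneous_def by blast

lemma holo_onI:
  "(\<And>x. x \<in> U \<Longrightarrow> \<exists>L. (g has_derivative L) (at x) \<and> complex_homogeneous L) \<Longrightarrow> holo_on U g"
  unfolding holo_on_def complex_homogeneous_def by blast

lemma axis_zero [simp]: "axis a 0 = 0"
  by simp

lemma bounded_linear_axis: "bounded_linear (axis a :: complex \<Rightarrow> complex^'n::finite)"
proof -
  have "linear (axis a :: complex \<Rightarrow> complex^'n)"
    by (rule linearI) (auto simp: axis_def vec_eq_iff)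
  then show ?thesis by (simp add: linear_conv_bounded_linear)
qed

lemma complex_homogeneous_axis:
  fixes L :: "complex^'n::finite \<Rightarrow> complex"
  assumes "bounded_linear L" "complex_homogeneous L"
  shows "L (axis a t) = t * L (axis a 1)"
proof -
  interpret L: bounded_linear L by fact
  have i: "L (\<chi> i. \<i> * (axis a 1 :: complex^'n) $ i) = \<i> * L (axis a 1)"
    using assms(2) unfolding complex_homogeneous_def by blast
  have "axis a t = Re t *\<^sub>R axis a 1 + Im t *\<^sub>R (\<chi> i. \<i> * (axis a 1 :: complex^'n) $ i)"
    by (simp add: vec_eq_iff axis_def) (simp add: complex_eq_iff)
  then have "L (axis a t) = Re t *\<^sub>R L (axis a 1) + Im t *\<^sub>R (\<i> * L (axis a 1))"
    by (simp only: L.add L.scaleR i)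
  also have "\<dots> = (of_real (Re t) + \<i> * of_real (Im t)) * L (axis a 1)"
    by (simp add: scaleR_conv_of_real algebra_simps)
  also have "of_real (Re t) + \<i> * of_real (Im t) = t"
    by (simp add: complex_eq_iff)
  finally show ?thesis .
qed

lemma has_derivative_line:
  fixes g :: "complex^'n::finite \<Rightarrow> complex"
  assumes g: "(g has_derivative L) (at x)" and L: "complex_homogeneous L"
  shows "((\<lambda>t. g (x + axis a t)) has_field_derivative L (axis a 1)) (at 0)"
proof -
  have line: "((\<lambda>t. x + axis a t) has_derivative axis a) (at 0)"
    using has_derivative_add[OF has_derivative_const
        bounded_linear_imp_has_derivative[OF bounded_linear_axis]] by simp
  have "(g has_derivative L) (at (x + axis a 0))"
    using g by simp
  from diff_chain_at[OF line this]
  have "((\<lambda>t. g (x + axis a t)) has_derivative (\<lambda>t. L (axis a t))) (at 0)"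
    by (simp add: o_def)
  moreover have "(\<lambda>t. L (axis a t)) = (*) (L (axis a 1))"
  proof
    fix t show "L (axis a t) = L (axis a 1) * t"
      using complex_homogeneous_axis[OF has_derivative_bounded_linear[OF g] L, of a t]
      by (simp only: mult.commute)
  qed
  ultimately show ?thesis
    unfolding has_field_derivative_def by simp
qed

lemma pdc_eqI: "((\<lambda>t. g (x + axis a t)) has_field_derivative D) (at 0) \<Longrightarrow> pdc a g x = D"
  unfolding pdc_def axis_def by (rule DERIV_imp_deriv)

lemma pdc_has_field_derivative:
  assumes "holo_on U g" "x \<in> U"
  shows "((\<lambda>t. g (x + axis a t)) has_field_derivative pdc a g x) (at 0)"
proof -
  obtain L where "(g has_derivative L) (at x)" "complex_homogeneous L"
    using holo_onD[OF assms] by blast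
  with has_derivative_line pdc_eqI show ?thesis by metis
qed

lemma pdc_eq_derivative:
  "(g has_derivative L) (at x) \<Longrightarrow> complex_homogeneous L \<Longrightarrow> pdc a g x = L (axis a 1)"
  by (rule pdc_eqI, rule has_derivative_line)

lemma holo_const: "holo_on U (\<lambda>y. c)"
  by (rule holo_onI, rule exI[of _ "\<lambda>_. 0"]) (auto simp: complex_homogeneous_def)

lemma holo_add: "holo_on U f \<Longrightarrow> holo_on U g \<Longrightarrow> holo_on U (\<lambda>y. f y + g y)"
proof (rule holo_onI)
  fix x assume "holo_on U f" "holo_on U g" "x \<in> U"
  then obtain L1 L2 where "(f has_derivative L1) (at x)" "complex_homogeneous L1"
    "(g has_derivative L2) (at x)" "complex_homogeneous L2"
    using holo_onD by metis
  then show "\<exists>L. ((\<lambda>y. f y + g y) has_derivative L) (at x) \<and> complex_homogeneous L"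
    by (intro exI[of _ "\<lambda>h. L1 h + L2 h"])
       (auto intro: has_derivative_add simp: complex_homogeneous_def algebra_simps)
qed

lemma holo_uminus: "holo_on U f \<Longrightarrow> holo_on U (\<lambda>y. - f y)"
proof (rule holo_onI)
  fix x assume "holo_on U f" "x \<in> U"
  then obtain L where "(f has_derivative L) (at x)" "complex_homogeneous L"
    using holo_onD by metis
  then show "\<exists>L. ((\<lambda>y. - f y) has_derivative L) (at x) \<and> complex_homogeneous L"
    by (intro exI[of _ "\<lambda>h. - L h"]) (auto intro: has_derivative_minus simp: complex_homogeneous_def)
qed

lemma holo_mult: "holo_on U f \<Longrightarrow> holo_on U g \<Longrightarrow> holo_on U (\<lambda>y. f y * g y)"
proof (rule holo_onI)
  fix x assume "holo_on U f" "holo_on U g" "x \<in> U"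
  then obtain L1 L2 where "(f has_derivative L1) (at x)" "complex_homogeneous L1"
    "(g has_derivative L2) (at x)" "complex_homogeneous L2"
    using holo_onD by metis
  then show "\<exists>L. ((\<lambda>y. f y * g y) has_derivative L) (at x) \<and> complex_homogeneous L"
    by (intro exI[of _ "\<lambda>h. f x * L2 h + L1 h * g x"] conjI has_derivative_mult)
       (auto simp: complex_homogeneous_def algebra_simps)
qed

lemma holo_inverse: "holo_on U f \<Longrightarrow> (\<And>y. y \<in> U \<Longrightarrow> f y \<noteq> 0) \<Longrightarrow> holo_on U (\<lambda>y. inverse (f y))"
proof (rule holo_onI)
  fix x assume "holo_on U f" "\<And>y. y \<in> U \<Longrightarrow> f y \<noteq> 0" "x \<in> U"
  then obtain L where "(f has_derivative L) (at x)" "complex_homogeneous L" "f x \<noteq> 0"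
    using holo_onD by metis
  then show "\<exists>L. ((\<lambda>y. inverse (f y)) has_derivative L) (at x) \<and> complex_homogeneous L"
    by (intro exI[of _ "\<lambda>h. - (inverse (f x) * L h * inverse (f x))"] conjI
        Deriv.has_derivative_inverse)
       (auto simp: complex_homogeneous_def algebra_simps)
qed

lemma holo_sum: "finite S \<Longrightarrow> (\<And>s. s \<in> S \<Longrightarrow> holo_on U (f s)) \<Longrightarrow> holo_on U (\<lambda>y. \<Sum>s\<in>S. f s y)"
  by (induction S rule: finite_induct) (auto intro: holo_add holo_const)

lemma holo_prod: "finite S \<Longrightarrow> (\<And>s. s \<in> S \<Longrightarrow> holo_on U (f s)) \<Longrightarrow> holo_on U (\<lambda>y. \<Prod>s\<in>S. f s y)"
  by (induction S rule: finite_induct) (auto intro: holo_mult holo_const)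

lemma holo_cong:
  assumes "open U" "holo_on U f" "\<And>y. y \<in> U \<Longrightarrow> f y = g y"
  shows "holo_on U g"
proof (rule holo_onI)
  fix x assume x: "x \<in> U"
  then obtain L where L: "(f has_derivative L) (at x)" "complex_homogeneous L"
    using holo_onD assms(2) by metis
  have "(g has_derivative L) (at x)"
    by (rule has_derivative_transform_within_open[OF L(1) assms(1) x]) (use assms(3) in auto)
  then show "\<exists>L. (g has_derivative L) (at x) \<and> complex_homogeneous L" using L(2) by blast
qed

lemma eventually_line_in_open:
  fixes x :: "complex^'n::finite"
  assumes "open U" "x \<in> U"
  shows "eventually (\<lambda>t. x + axis a t \<in> U) (nhds 0)"
proof -
  have "continuous_on UNIV (\<lambda>t::complex. x + axis a t)"
    using bounded_linear_axis[of a] by (intro continuous_intros linear_continuous_on) auto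
  then have "open ((\<lambda>t. x + axis a t) -` U)"
    using assms(1) by (simp add: continuous_on_open_vimage)
  moreover have "0 \<in> (\<lambda>t. x + axis a t) -` U"
    using assms(2) by simp
  ultimately show ?thesis using eventually_nhds by blast
qed

lemma pdc_cong:
  assumes "open U" "x \<in> U" "\<And>y. y \<in> U \<Longrightarrow> f y = g y"
  shows "pdc a f x = pdc a g x"
  unfolding pdc_def axis_def[symmetric]
  by (rule deriv_cong_ev)
     (use eventually_line_in_open[OF assms(1,2), of a] assms(3) in \<open>auto elim: eventually_mono\<close>)

lemma pdc_const: "pdc a (\<lambda>y. c) x = 0"
  by (rule pdc_eqI) simp

lemma pdc_mult:
  assumes "holo_on U f" "holo_on U g" "x \<in> U"
  shows "pdc a (\<lambda>y. f y * g y) x = pdc a f x * g x + f x * pdc a g x"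
proof (rule pdc_eqI)
  show "((\<lambda>t. f (x + axis a t) * g (x + axis a t)) has_field_derivative
      pdc a f x * g x + f x * pdc a g x) (at 0)"
    using DERIV_mult[OF pdc_has_field_derivative[OF assms(1,3), of a]
        pdc_has_field_derivative[OF assms(2,3), of a]]
    by (simp add: mult.commute[of "pdc a g x"])
qed

lemma pdc_sum:
  assumes "finite S" "\<And>s. s \<in> S \<Longrightarrow> holo_on U (f s)" "x \<in> U"
  shows "pdc a (\<lambda>y. \<Sum>s\<in>S. f s y) x = (\<Sum>s\<in>S. pdc a (f s) x)"
  using assms by (intro pdc_eqI DERIV_sum pdc_has_field_derivative) auto

text \<open>The Frechet derivative is complex linear, hence determined by the partial derivatives.\<close>

lemma holo_constant_on:
  assumes "open U" "connected U" "holo_on U g" "\<And>x a. x \<in> U \<Longrightarrow> pdc a g x = 0"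
  shows "\<exists>c. \<forall>x\<in>U. g x = c"
proof -
  have "(g has_derivative (\<lambda>h. 0)) (at x within U)" if x: "x \<in> U" for x
  proof -
    obtain L where L: "(g has_derivative L) (at x)" "complex_homogeneous L"
      using holo_onD assms(3) x by metis
    interpret L: bounded_linear L using has_derivative_bounded_linear[OF L(1)] .
    have "L v = 0" for v
    proof -
      have "v = (\<Sum>a\<in>UNIV. axis a (v $ a))"
        by (simp add: vec_eq_iff axis_def)
      then have "L v = L (\<Sum>a\<in>UNIV. axis a (v $ a))"
        by (rule arg_cong)
      also have "\<dots> = (\<Sum>a\<in>UNIV. L (axis a (v $ a)))"
        by (rule L.sum)
      also have "\<dots> = (\<Sum>a\<in>UNIV. v $ a * L (axis a 1))"
        by (intro sum.cong refl complex_homogeneous_axis L.bounded_linear_axioms L(2))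
      also have "\<dots> = 0"
        using pdc_eq_derivative[OF L] assms(4) x by simp
      finally show ?thesis .
    qed
    then have "L = (\<lambda>h. 0)" by auto
    then show ?thesis using L(1) has_derivative_at_withinI by blast
  qed
  moreover have "continuous_on U g"
  proof (rule continuous_at_imp_continuous_on, rule ballI)
    fix x assume "x \<in> U"
    then obtain L where "(g has_derivative L) (at x)" using holo_onD assms(3) by metis
    then show "isCont g x" using has_derivative_continuous by blast
  qed
  ultimately have "g constant_on U"
    using has_derivative_zero_connected_constant_on[OF assms(2,1) finite.emptyI] by blast
  then show ?thesis unfolding constant_on_def by blast
qed

lemma mholo_entry: "mholo_on U M \<Longrightarrow> holo_on U (\<lambda>y. M y $ i $ j)"
  by (simp add: mholo_on_def)

lemma mholo_const: "mholo_on U (\<lambda>y. c)"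
  by (simp add: mholo_on_def holo_const)

lemma mholo_uminus: "mholo_on U M \<Longrightarrow> mholo_on U (\<lambda>y. - M y)"
  by (simp add: mholo_on_def holo_uminus)

lemma mholo_mult: "mholo_on U M \<Longrightarrow> mholo_on U N \<Longrightarrow> mholo_on U (\<lambda>y. M y ** N y)"
  unfolding mholo_on_def matrix_matrix_mult_def by (auto intro!: holo_sum holo_mult)

lemma mholo_sum:
  "finite S \<Longrightarrow> (\<And>s. s \<in> S \<Longrightarrow> mholo_on U (M s)) \<Longrightarrow> mholo_on U (\<lambda>y. \<Sum>s\<in>S. M s y)"
  unfolding mholo_on_def by (auto intro!: holo_sum)

lemma mholo_cong: "open U \<Longrightarrow> mholo_on U M \<Longrightarrow> (\<And>y. y \<in> U \<Longrightarrow> M y = N y) \<Longrightarrow> mholo_on U N"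
  unfolding mholo_on_def using holo_cong[of U "\<lambda>y. M y $ _ $ _" "\<lambda>y. N y $ _ $ _"] by simp

lemma pdm_cong: "open U \<Longrightarrow> x \<in> U \<Longrightarrow> (\<And>y. y \<in> U \<Longrightarrow> M y = N y) \<Longrightarrow> pdm a M x = pdm a N x"
  unfolding pdm_def by (auto simp: vec_eq_iff intro!: pdc_cong)

lemma pdm_const: "pdm a (\<lambda>y. c) x = 0"
  unfolding pdm_def by (simp add: pdc_const vec_eq_iff)

lemma pdm_sum:
  "finite S \<Longrightarrow> (\<And>s. s \<in> S \<Longrightarrow> mholo_on U (M s)) \<Longrightarrow> x \<in> U \<Longrightarrow>
    pdm a (\<lambda>y. \<Sum>s\<in>S. M s y) x = (\<Sum>s\<in>S. pdm a (M s) x)"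
  unfolding pdm_def mholo_on_def by (simp add: vec_eq_iff) (intro allI pdc_sum, auto)

lemma pdm_mult:
  assumes "mholo_on U M" "mholo_on U N" "x \<in> U"
  shows "pdm a (\<lambda>y. M y ** N y) x = pdm a M x ** N x + M x ** pdm a N x"
proof -
  have "pdc a (\<lambda>y. (M y ** N y) $ i $ j) x = (pdm a M x ** N x + M x ** pdm a N x) $ i $ j" for i j
  proof -
    have "pdc a (\<lambda>y. (M y ** N y) $ i $ j) x = pdc a (\<lambda>y. \<Sum>k\<in>UNIV. M y $ i $ k * N y $ k $ j) x"
      by (simp add: matrix_matrix_mult_def)
    also have "\<dots> = (\<Sum>k\<in>UNIV. pdc a (\<lambda>y. M y $ i $ k) x * N x $ k $ j
                                + M x $ i $ k * pdc a (\<lambda>y. N y $ k $ j) x)"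
      using assms by (subst pdc_sum) (auto intro!: sum.cong holo_mult mholo_entry pdc_mult)
    also have "\<dots> = (pdm a M x ** N x + M x ** pdm a N x) $ i $ j"
      by (simp add: matrix_matrix_mult_def pdm_def sum.distrib)
    finally show ?thesis .
  qed
  then show ?thesis unfolding pdm_def by (simp add: vec_eq_iff)
qed

lemma mholo_constant_on:
  assumes "open U" "connected U" "mholo_on U M" "\<And>x a. x \<in> U \<Longrightarrow> pdm a M x = 0"
  shows "\<exists>c. \<forall>x\<in>U. M x = c"
proof -
  have "\<exists>c. \<forall>x\<in>U. M x $ i $ j = c" for i j
    using assms(4) by (intro holo_constant_on[OF assms(1,2) mholo_entry[OF assms(3)]])
                      (simp add: pdm_def vec_eq_iff)
  then obtain c where "\<forall>i j. \<forall>x\<in>U. M x $ i $ j = c i j" by metis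
  then show ?thesis by (intro exI[of _ "\<chi> i j. c i j"]) (simp add: vec_eq_iff)
qed

lemma holo_det: "mholo_on U M \<Longrightarrow> holo_on U (\<lambda>y. det (M y))"
  unfolding det_def
  by (intro holo_sum holo_mult holo_const holo_prod finite_permutations finite_UNIV)
     (auto intro: mholo_entry)

text \<open>Cramer's rule expresses the entries of the inverse as rational functions of the entries.\<close>

lemma mholo_matrix_inverse:
  assumes U: "open U" and M: "mholo_on U M" and inv: "\<And>y. y \<in> U \<Longrightarrow> M y ** N y = mat 1"
  shows "mholo_on U N"
  unfolding mholo_on_def
proof (intro allI)
  fix k j
  define R where "R y = (\<chi> i l. if l = k then column j (mat 1 :: complex^'a^'a) $ i else M y $ i $ l)"
    for y
  have det_nz: "det (M y) \<noteq> 0" if "y \<in> U" for y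
  proof -
    have "invertible (M y)"
      unfolding invertible_right_inverse using inv[OF that] by blast
    then show ?thesis by (simp add: invertible_det_nz)
  qed
  have "N y $ k $ j = det (R y) * inverse (det (M y))" if y: "y \<in> U" for y
  proof -
    have "M y *v column j (N y) = column j (mat 1)"
      using arg_cong[OF inv[OF y], of "column j"]
      by (simp add: column_def matrix_vector_mult_def matrix_matrix_mult_def)
    then have "column j (N y) = (\<chi> l. det (\<chi> i l'. if l' = l then column j (mat 1) $ i
        else M y $ i $ l') / det (M y))"
      by (rule cramer[OF det_nz[OF y], THEN iffD1])
    from arg_cong[OF this, of "\<lambda>v. v $ k"] show ?thesis
      by (simp add: R_def divide_inverse column_def)
  qed
  moreover have "holo_on U (\<lambda>y. det (R y) * inverse (det (M y)))"
  proof (intro holo_mult holo_det holo_inverse)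
    show "mholo_on U R"
      unfolding mholo_on_def R_def
    proof (intro allI)
      fix i l
      show "holo_on U (\<lambda>y. (\<chi> i l. if l = k then column j (mat 1) $ i else M y $ i $ l) $ i $ l)"
        using M by (cases "l = k") (simp_all add: mholo_on_def holo_const)
    qed
  qed (use M det_nz in auto)
  ultimately show "holo_on U (\<lambda>y. N y $ k $ j)"
    using holo_cong[OF U, of "\<lambda>y. det (R y) * inverse (det (M y))"] by simp
qed

section \<open>Series with holomorphic coefficients\<close>

definition vanishes_below :: "int \<Rightarrow> 'n::finite mser \<Rightarrow> bool" where
  "vanishes_below p S \<longleftrightarrow> (\<forall>k<p. \<forall>y. S k y = 0)"

lemma vanishes_belowD: "vanishes_below p S \<Longrightarrow> k < p \<Longrightarrow> S k y = 0"
  by (simp add: vanishes_below_def)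

lemma vanishes_below_mono: "vanishes_below p S \<Longrightarrow> q \<le> p \<Longrightarrow> vanishes_below q S"
  by (simp add: vanishes_below_def)

lemma vanishes_below_diff:
  "vanishes_below p S \<Longrightarrow> vanishes_below p R \<Longrightarrow> vanishes_below p (\<lambda>k y. S k y - R k y)"
  by (simp add: vanishes_below_def)

lemma vanishes_below_lone: "vanishes_below 0 lone"
  by (simp add: vanishes_below_def lone_def)

lemma vanishes_below_cser: "vanishes_below (-1) (cser C a)"
  by (simp add: vanishes_below_def cser_def)

lemma vanishes_below_negser: "vanishes_below (- int m) (negser m A)"
  by (simp add: vanishes_below_def negser_def)

lemma lmul_eq_cauchy_mult: "lmul S R k y = cauchy_mult (\<lambda>i. S i y) (\<lambda>i. R i y) k"
  by (simp add: lmul_def cauchy_mult_def)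

lemma lmul_eq_interval:
  "vanishes_below p S \<Longrightarrow> vanishes_below q R \<Longrightarrow>
    lmul S R k y = (\<Sum>i\<in>{p..k-q}. S i y ** R (k - i) y)"
  unfolding lmul_eq_cauchy_mult by (rule cauchy_mult_eq_interval) (auto simp: vanishes_below_def)

lemma vanishes_below_lmul:
  "vanishes_below p S \<Longrightarrow> vanishes_below q R \<Longrightarrow> vanishes_below (p + q) (lmul S R)"
  unfolding vanishes_below_def lmul_eq_cauchy_mult by (auto intro!: cauchy_mult_eq_0)

lemma mholo_lmul:
  assumes "vanishes_below p S" "vanishes_below q R" "\<And>i. mholo_on U (S i)" "\<And>i. mholo_on U (R i)"
  shows "mholo_on U (lmul S R k)"
  unfolding lmul_eq_interval[OF assms(1,2), abs_def]
  using assms(3,4) by (auto intro!: mholo_sum mholo_mult)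

lemma mholo_negser:
  assumes "\<And>j. j \<in> {1..m} \<Longrightarrow> mholo_on U (A j)"
  shows "mholo_on U (negser m A k)"
proof -
  have "negser m A k = (if - int m \<le> k \<and> k \<le> -1 then A (nat (- k)) else (\<lambda>y. 0))"
    by (auto simp: negser_def)
  moreover have "nat (- k) \<in> {1..m}" if "- int m \<le> k \<and> k \<le> -1"
    using that by auto
  ultimately show ?thesis
    using assms by (auto simp: mholo_const)
qed

lemma vanishes_below_pdser: "vanishes_below p S \<Longrightarrow> vanishes_below p (pdser a S)"
  unfolding vanishes_below_def pdser_def by (auto simp: pdm_def pdc_const vec_eq_iff)

lemma pdser_lmul:
  assumes "vanishes_below p S" "vanishes_below q R" "\<And>i. mholo_on U (S i)" "\<And>i. mholo_on U (R i)"
    and "x \<in> U"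
  shows "pdser a (lmul S R) k x = lmul (pdser a S) R k x + lmul S (pdser a R) k x"
proof -
  have "lmul S R k = (\<lambda>y. \<Sum>i\<in>{p..k-q}. S i y ** R (k - i) y)"
    by (simp add: fun_eq_iff lmul_eq_interval[OF assms(1,2)])
  then have "pdser a (lmul S R) k x = pdm a (\<lambda>y. \<Sum>i\<in>{p..k-q}. S i y ** R (k - i) y) x"
    by (simp add: pdser_def)
  also have "\<dots> = (\<Sum>i\<in>{p..k-q}. pdm a (S i) x ** R (k - i) x + S i x ** pdm a (R (k - i)) x)"
    using assms by (subst pdm_sum) (auto intro!: sum.cong mholo_mult pdm_mult)
  also have "\<dots> = lmul (pdser a S) R k x + lmul S (pdser a R) k x"
    by (simp add: lmul_eq_interval[OF vanishes_below_pdser[OF assms(1)] assms(2)]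
        lmul_eq_interval[OF assms(1) vanishes_below_pdser[OF assms(2)]] sum.distrib pdser_def)
  finally show ?thesis .
qed

definition laurent_at :: "'n::finite mser \<Rightarrow> complex^'n \<Rightarrow> 'n laurent" where
  "laurent_at S y = Abs_laurent (\<lambda>k. S k y)"

lemma lcoeff_laurent_at: "vanishes_below p S \<Longrightarrow> lcoeff (laurent_at S y) = (\<lambda>k. S k y)"
  unfolding laurent_at_def by (rule Abs_laurent_inverse) (auto simp: vanishes_below_def)

lemma laurent_at_vanishes_below: "vanishes_below p S \<Longrightarrow> \<forall>k<p. lcoeff (laurent_at S y) k = 0"
  by (simp add: lcoeff_laurent_at vanishes_below_def)

lemma laurent_eqI: "(\<And>k. lcoeff a k = lcoeff b k) \<Longrightarrow> a = b"
  by (metis lcoeff_inject ext)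

lemma laurent_at_cong: "(\<And>k. S k y = R k y) \<Longrightarrow> laurent_at S y = laurent_at R y"
  by (simp add: laurent_at_def)

lemma laurent_at_lmul:
  "vanishes_below p S \<Longrightarrow> vanishes_below q R \<Longrightarrow> laurent_at (lmul S R) y = laurent_at S y * laurent_at R y"
  by (rule laurent_eqI)
     (simp add: lcoeff_laurent_at[OF vanishes_below_lmul] lcoeff_laurent_at lmul_eq_cauchy_mult lcoeff_mult)

lemma laurent_at_add:
  assumes "vanishes_below p S" "vanishes_below q R"
  shows "laurent_at (\<lambda>k y. S k y + R k y) y = laurent_at S y + laurent_at R y"
proof -
  have "vanishes_below (min p q) (\<lambda>k y. S k y + R k y)"
    using assms by (simp add: vanishes_below_def)
  then show ?thesis
    using assms by (intro laurent_eqI) (simp add: lcoeff_laurent_at)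
qed

lemma laurent_at_diff:
  assumes "vanishes_below p S" "vanishes_below q R"
  shows "laurent_at (\<lambda>k y. S k y - R k y) y = laurent_at S y - laurent_at R y"
proof -
  have "vanishes_below (min p q) (\<lambda>k y. S k y - R k y)"
    using assms by (simp add: vanishes_below_def)
  then show ?thesis
    using assms by (intro laurent_eqI) (simp add: lcoeff_laurent_at)
qed

lemma laurent_at_lone: "laurent_at lone y = 1"
  by (rule laurent_eqI) (simp add: lcoeff_laurent_at[OF vanishes_below_lone] lone_def)

lemma laurent_at_pdser_lmul:
  assumes "vanishes_below p S" "vanishes_below q R" "\<And>i. mholo_on U (S i)" "\<And>i. mholo_on U (R i)"
    and "x \<in> U"
  shows "laurent_at (pdser a (lmul S R)) x
    = laurent_at (pdser a S) x * laurent_at R x + laurent_at S x * laurent_at (pdser a R) x"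
proof -
  have "laurent_at (pdser a (lmul S R)) x
      = laurent_at (\<lambda>k y. lmul (pdser a S) R k y + lmul S (pdser a R) k y) x"
    by (rule laurent_at_cong) (rule pdser_lmul[OF assms])
  also have "\<dots> = laurent_at (lmul (pdser a S) R) x + laurent_at (lmul S (pdser a R)) x"
    using vanishes_below_lmul[OF vanishes_below_pdser[OF assms(1)] assms(2)]
      vanishes_below_lmul[OF assms(1) vanishes_below_pdser[OF assms(2)]]
    by (rule laurent_at_add)
  finally show ?thesis
    by (simp add: laurent_at_lmul[OF vanishes_below_pdser[OF assms(1)] assms(2)]
        laurent_at_lmul[OF assms(1) vanishes_below_pdser[OF assms(2)]])
qed

section \<open>Diagonal matrices\<close>

lemma matrix_mul_uminus_right: "A ** (- B) = - (A ** B)" for A :: "'a::ring_1^'m^'n"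
  by (simp add: vec_eq_iff matrix_matrix_mult_def sum_negf)

lemma matrix_mult_diag_right:
  assumes "is_diag D"
  shows "(Q ** D) $ r $ c = Q $ r $ c * D $ c $ c"
proof -
  have "(Q ** D) $ r $ c = (\<Sum>k\<in>UNIV. if k = c then Q $ r $ c * D $ c $ c else 0)"
    unfolding matrix_matrix_mult_def vec_lambda_beta
    by (rule sum.cong) (use assms in \<open>auto simp: is_diag_def\<close>)
  then show ?thesis by simp
qed

lemma matrix_mult_diag_left:
  assumes "is_diag D"
  shows "(D ** Q) $ r $ c = D $ r $ r * Q $ r $ c"
proof -
  have "(D ** Q) $ r $ c = (\<Sum>k\<in>UNIV. if k = r then D $ r $ r * Q $ r $ c else 0)"
    unfolding matrix_matrix_mult_def vec_lambda_beta
    by (rule sum.cong) (use assms in \<open>auto simp: is_diag_def\<close>)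
  then show ?thesis by simp
qed

lemma is_diag_diagm: "is_diag (diagm l)"
  by (simp add: is_diag_def diagm_def)

lemma diagm_nth [simp]: "diagm l $ r $ r = l $ r"
  by (simp add: diagm_def)

lemma is_diag_uminus [simp]: "is_diag (- M) \<longleftrightarrow> is_diag M"
  by (simp add: is_diag_def)

lemma matrix_vector_mult_axis: "(Q *v axis c z) $ r = Q $ r $ c * z"
proof -
  have "(Q *v axis c z) $ r = (\<Sum>s\<in>UNIV. if s = c then Q $ r $ c * z else 0)"
    unfolding matrix_vector_mult_def vec_lambda_beta by (rule sum.cong) (auto simp: axis_def)
  then show ?thesis by simp
qed

lemma invertible_ker_eq_0:
  fixes Q :: "'a::field^'n::finite^'n"
  assumes "invertible Q" "Q *v v = 0"
  shows "v = 0"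
proof -
  from assms(1) obtain Q' where "Q' ** Q = mat 1"
    by (auto simp: invertible_left_inverse)
  then show ?thesis
    using matrix_left_invertible_ker assms(2) by blast
qed

lemma invertible_column_nonzero:
  fixes Q :: "'a::field^'n::finite^'n"
  assumes "invertible Q"
  obtains r where "Q $ r $ c \<noteq> 0"
proof -
  have "Q *v axis c 1 \<noteq> 0"
    using invertible_ker_eq_0[OF assms, of "axis c 1"] by auto
  then show thesis
    using that by (auto simp: vec_eq_iff matrix_vector_mult_axis)
qed

text \<open>Otherwise columns \<open>i\<close> and \<open>j\<close> would both be multiples of the \<open>r\<close>-th unit vector.\<close>

lemma invertible_columns_leave_row:
  fixes Q :: "'a::field^'n::finite^'n"
  assumes Q: "invertible Q" and ij: "i \<noteq> j"
  shows "\<exists>r'. r' \<noteq> r \<and> (Q $ r' $ i \<noteq> 0 \<or> Q $ r' $ j \<noteq> 0)"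
proof (rule ccontr)
  assume off: "\<not> ?thesis"
  obtain r0 where "Q $ r0 $ i \<noteq> 0"
    using invertible_column_nonzero[OF Q] .
  with off have r: "Q $ r $ i \<noteq> 0"
    by (cases "r0 = r") auto
  have "Q $ r' $ i * Q $ r $ j - Q $ r' $ j * Q $ r $ i = 0" for r'
    using off by (cases "r' = r") (auto simp: mult.commute)
  then have "Q *v (axis i (Q $ r $ j) - axis j (Q $ r $ i)) = 0"
    by (simp add: vec_eq_iff matrix_vector_mult_diff_distrib matrix_vector_mult_axis mult.commute)
  then have "axis i (Q $ r $ j) - axis j (Q $ r $ i) = 0"
    by (rule invertible_ker_eq_0[OF Q])
  then have "(axis i (Q $ r $ j) - axis j (Q $ r $ i)) $ j = 0"
    by simp
  then show False
    using r ij by (simp add: axis_def)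
qed

lemma intertwined_diagonal_entries_separate:
  fixes Q :: "complex^'n::finite^'n" and D :: "'a \<Rightarrow> complex^'n^'n"
  assumes Q: "invertible Q" and D: "\<And>a. is_diag (D a)"
    and intertwine: "\<And>a. Q ** D a = diagm (lam a) ** Q"
    and sep: "\<And>r s. r \<noteq> s \<Longrightarrow> \<exists>a. lam a $ r \<noteq> lam a $ s"
    and ij: "i \<noteq> j"
  shows "\<exists>a. D a $ i $ i \<noteq> D a $ j $ j"
proof (rule ccontr)
  assume "\<not> ?thesis"
  then have same: "D a $ j $ j = D a $ i $ i" for a
    by auto
  have eigen: "lam a $ r = D a $ c $ c" if "Q $ r $ c \<noteq> 0" for a r c
    using arg_cong[OF intertwine[of a], of "\<lambda>M. M $ r $ c"] that
    by (simp add: matrix_mult_diag_right[OF D] matrix_mult_diag_left[OF is_diag_diagm] mult.commute)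
  obtain r where r: "Q $ r $ i \<noteq> 0"
    using invertible_column_nonzero[OF Q] .
  obtain r' where r': "r' \<noteq> r" "Q $ r' $ i \<noteq> 0 \<or> Q $ r' $ j \<noteq> 0"
    using invertible_columns_leave_row[OF Q ij] by blast
  then have "lam a $ r' = lam a $ r" for a
    using eigen[of r' i a] eigen[of r' j a] eigen[OF r, of a] same[of a] by auto
  then show False
    using sep[OF r'(1)] by simp
qed

lemma diagonalisation_conjugate:
  fixes M P P' S S' :: "complex^'n::finite^'n"
  assumes P: "P' ** P = mat 1" "P ** P' = mat 1" and S: "S ** S' = mat 1"
    and M: "M ** P = P ** diagm l"
  shows "(P' ** S) ** (S' ** M ** S) = diagm l ** (P' ** S)"
proof -
  have "(P' ** S) ** (S' ** M ** S) = P' ** (S ** S') ** M ** S"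
    by (simp add: matrix_mul_assoc)
  also have "\<dots> = P' ** M ** (P ** P') ** S"
    by (simp add: S P)
  also have "\<dots> = P' ** (M ** P) ** P' ** S"
    by (simp add: matrix_mul_assoc)
  also have "\<dots> = (P' ** P) ** diagm l ** (P' ** S)"
    by (simp add: M matrix_mul_assoc)
  also have "\<dots> = diagm l ** (P' ** S)"
    by (simp add: P)
  finally show ?thesis .
qed

section \<open>Flows by commutators with diagonal series\<close>

lemma commutator_diag_entry:
  assumes Y: "vanishes_below p Y" and D: "vanishes_below (-1) D" and diag: "\<And>l. is_diag (D l y)"
  shows "(lmul Y D k y - lmul D Y k y) $ r $ s
    = (\<Sum>l\<in>{p..k+1}. Y l y $ r $ s * (D (k - l) y $ s $ s - D (k - l) y $ r $ r))"
proof -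
  have "lmul D Y k y = (\<Sum>i\<in>{-1..k-p}. D i y ** Y (k - i) y)"
    by (rule lmul_eq_interval[OF D Y])
  also have "\<dots> = (\<Sum>l\<in>{p..k+1}. D (k - l) y ** Y l y)"
    by (rule sum.reindex_bij_witness[of _ "\<lambda>l. k - l" "\<lambda>i. k - i"]) auto
  finally have "lmul Y D k y - lmul D Y k y
      = (\<Sum>l\<in>{p..k+1}. Y l y ** D (k - l) y - D (k - l) y ** Y l y)"
    by (simp add: lmul_eq_interval[OF Y D] sum_subtractf)
  then show ?thesis
    by (simp add: matrix_mult_diag_right[OF diag] matrix_mult_diag_left[OF diag] algebra_simps)
qed

lemma pdm_offdiag_eq_0:
  assumes "open U" "x \<in> U" "\<And>y. y \<in> U \<Longrightarrow> is_diag (M y)" "r \<noteq> s"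
  shows "pdm a M x $ r $ s = 0"
proof -
  have "pdc a (\<lambda>y. M y $ r $ s) x = pdc a (\<lambda>y. 0) x"
    by (rule pdc_cong[OF assms(1,2)]) (use assms(3,4) in \<open>auto simp: is_diag_def\<close>)
  then show ?thesis by (simp add: pdm_def pdc_const)
qed

context
  fixes U :: "(complex^'n::finite) set" and Y :: "'n mser" and H :: "'n \<Rightarrow> 'n mser" and p :: int
  assumes U: "open U" and Y: "vanishes_below p Y"
    and H: "\<And>a. vanishes_below (-1) (H a)" "\<And>a l y. y \<in> U \<Longrightarrow> is_diag (H a l y)"
    and flow: "\<And>a k y. y \<in> U \<Longrightarrow> k \<le> -2 \<Longrightarrow> pdm a (Y k) y = lmul Y (H a) k y - lmul (H a) Y k y"
    and sep: "\<And>y r s. y \<in> U \<Longrightarrow> r \<noteq> s \<Longrightarrow> \<exists>a. H a (-1) y $ r $ r \<noteq> H a (-1) y $ s $ s"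
begin

text \<open>Off the diagonal, the coefficient of \<open>hbar^k\<close> in \<open>[Y, H a]\<close> is
  \<open>Y (k+1) * (H a (-1) $ s $ s - H a (-1) $ r $ r)\<close> plus terms with lower coefficients of \<open>Y\<close>.\<close>

lemma commutator_flow_diagonal_step:
  assumes below: "\<And>l y. l \<le> k \<Longrightarrow> y \<in> U \<Longrightarrow> is_diag (Y l y)"
    and k: "k \<le> -2" and y: "y \<in> U"
  shows "is_diag (Y (k + 1) y)"
  unfolding is_diag_def
proof (intro allI impI)
  fix r s :: 'n assume rs: "r \<noteq> s"
  obtain a where a: "H a (-1) y $ r $ r \<noteq> H a (-1) y $ s $ s"
    using sep[OF y rs] by blast
  have "0 = pdm a (Y k) y $ r $ s"
    using pdm_offdiag_eq_0[OF U y _ rs] below k by simp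
  also have "\<dots> = (\<Sum>l\<in>{p..k+1}. Y l y $ r $ s * (H a (k - l) y $ s $ s - H a (k - l) y $ r $ r))"
    using flow[OF y k] commutator_diag_entry[OF Y H(1) H(2)[OF y]] by simp
  also have "\<dots> = Y (k + 1) y $ r $ s * (H a (-1) y $ s $ s - H a (-1) y $ r $ r)"
  proof (cases "p \<le> k + 1")
    case True
    then have "{p..k+1} = insert (k+1) {p..k}" by auto
    moreover have "Y l y $ r $ s = 0" if "l \<le> k" for l
      using below[OF that y] rs by (simp add: is_diag_def)
    ultimately show ?thesis by simp
  next
    case False
    then show ?thesis using vanishes_belowD[OF Y] by simp
  qed
  finally show "Y (k + 1) y $ r $ s = 0"
    using a by simp
qed

lemma commutator_flow_diagonal:
  assumes k: "k \<le> -1" and y: "y \<in> U"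
  shows "is_diag (Y k y)"
proof (cases "p - 1 \<le> k")
  case True
  have "k \<le> -1 \<longrightarrow> (\<forall>l\<le>k. \<forall>y\<in>U. is_diag (Y l y))"
    using True
  proof (induction k rule: int_ge_induct)
    case base
    show ?case using vanishes_belowD[OF Y] by (auto simp: is_diag_def)
  next
    case (step k)
    show ?case
    proof
      assume "k + 1 \<le> -1"
      then have below: "\<forall>l\<le>k. \<forall>y\<in>U. is_diag (Y l y)"
        using step.IH by simp
      then have top: "\<forall>y\<in>U. is_diag (Y (k + 1) y)"
        using commutator_flow_diagonal_step \<open>k + 1 \<le> -1\<close> by simp
      show "\<forall>l\<le>k+1. \<forall>y\<in>U. is_diag (Y l y)"
      proof (intro allI impI ballI)
        fix l y assume "l \<le> k + 1" "y \<in> U"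
        then show "is_diag (Y l y)"
          using below top by (cases "l = k + 1") auto
      qed
    qed
  qed
  then show ?thesis using k y by blast
next
  case False
  then show ?thesis using vanishes_belowD[OF Y] by (simp add: is_diag_def)
qed

lemma commutator_flow_constant:
  assumes "connected U" "\<And>k. mholo_on U (Y k)" and k: "k \<le> -2"
  shows "\<exists>c. \<forall>y\<in>U. Y k y = c"
proof (rule mholo_constant_on[OF U assms(1,2)])
  fix y a assume y: "y \<in> U"
  have "pdm a (Y k) y $ r $ s = 0" for r s
  proof (cases "r = s")
    case True
    then show ?thesis
      using flow[OF y k] commutator_diag_entry[OF Y H(1) H(2)[OF y]] by simp
  next
    case False
    then show ?thesis
      using pdm_offdiag_eq_0[OF U y _ False] commutator_flow_diagonal k by simp
  qed
  then show "pdm a (Y k) y = 0"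
    by (simp add: vec_eq_iff)
qed

end

section \<open>Dressing transformations\<close>

text \<open>With \<open>dt = c t + t h\<close> (the dressing equation) and \<open>dx = z + [c, x]\<close>, the derivative of the
  conjugate \<open>y = ti x t\<close> is \<open>[y, h] + ti z t\<close>.\<close>

lemma conjugate_derivative:
  fixes t ti dt dti x dx c h z :: "'a::ring_1"
  assumes inv: "ti * t = 1" "t * ti = 1"
    and dressing: "ti * (dt - c * t) = h"
    and inv_deriv: "dti * t + ti * dt = 0"
    and commutator: "dx - (c * x - x * c) = z"
  shows "dti * x * t + ti * dx * t + ti * x * dt = (ti * x * t) * h - h * (ti * x * t) + ti * z * t"
proof -
  have cancel: "t * (ti * w) = w" "ti * (t * w) = w" for w
    using inv by (simp_all flip: mult.assoc)
  have dt: "dt = c * t + t * h"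
    using arg_cong[OF dressing, of "(*) t"] by (simp add: cancel algebra_simps)
  have "dti = dti * t * ti"
    using inv by (simp add: mult.assoc)
  also have "dti * t = - (ti * dt)"
    using inv_deriv by (simp add: eq_neg_iff_add_eq_0)
  finally have dti: "dti = - (ti * dt * ti)"
    by simp
  have dx: "dx = z + (c * x - x * c)"
    using commutator by (simp add: algebra_simps)
  show ?thesis
    unfolding dti dx dt by (simp add: algebra_simps cancel)
qed

locale dressed_frame =
  fixes U :: "(complex^'n::finite) set"
    and C :: "'n \<Rightarrow> complex^'n \<Rightarrow> complex^'n^'n"
    and T Tinv :: "'n mser" and H :: "'n \<Rightarrow> 'n mser"
  assumes open_U: "open U"
    and T_vanishes: "vanishes_below 0 T" and Tinv_vanishes: "vanishes_below 0 Tinv"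
    and T_holo: "mholo_on U (T k)"
    and T_Tinv: "y \<in> U \<Longrightarrow> lmul T Tinv k y = lone k y"
    and Tinv_T: "y \<in> U \<Longrightarrow> lmul Tinv T k y = lone k y"
    and H_vanishes: "vanishes_below (-1) (H a)"
    and H_diag: "y \<in> U \<Longrightarrow> is_diag (H a k y)"
    and gauge: "y \<in> U \<Longrightarrow> lmul Tinv (\<lambda>k y. pdser a T k y - lmul (cser C a) T k y) k y = H a k y"

lemma dressing_imp_dressed_frame:
  assumes "open U" "dressing U C T Tinv"
  obtains H where "dressed_frame U C T Tinv H"
proof -
  have "\<forall>a. \<exists>h. (\<forall>k x. k < -1 \<longrightarrow> h k x = 0) \<and> (\<forall>k. \<forall>x\<in>U. is_diag (h k x)) \<and>
      (\<forall>k. \<forall>x\<in>U. lmul Tinv (\<lambda>k y. pdser a T k y - lmul (cser C a) T k y) k x = h k x)"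
    using assms(2) unfolding dressing_def by blast
  from choice[OF this] obtain H where "\<forall>a. (\<forall>k x. k < -1 \<longrightarrow> H a k x = 0) \<and> (\<forall>k. \<forall>x\<in>U. is_diag (H a k x)) \<and>
      (\<forall>k. \<forall>x\<in>U. lmul Tinv (\<lambda>k y. pdser a T k y - lmul (cser C a) T k y) k x = H a k x)"
    by blast
  then have "dressed_frame U C T Tinv H"
    using assms unfolding dressing_def by unfold_locales (auto simp: vanishes_below_def)
  then show thesis ..
qed

context dressed_frame
begin

lemma T0_Tinv0: "y \<in> U \<Longrightarrow> T 0 y ** Tinv 0 y = mat 1"
  using T_Tinv[of y 0] by (simp add: lmul_eq_interval[OF T_vanishes Tinv_vanishes] lone_def)

lemma Tinv0_T0: "y \<in> U \<Longrightarrow> Tinv 0 y ** T 0 y = mat 1"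
  using Tinv_T[of y 0] by (simp add: lmul_eq_interval[OF Tinv_vanishes T_vanishes] lone_def)

lemma Tinv_recursion:
  assumes n: "n > 0" and y: "y \<in> U"
  shows "Tinv n y = - (\<Sum>i\<in>{0..n - 1}. Tinv i y ** T (n - i) y) ** Tinv 0 y"
proof -
  have "(\<Sum>i\<in>{0..n}. Tinv i y ** T (n - i) y) = 0"
    using Tinv_T[OF y, of n] n by (simp add: lmul_eq_interval[OF Tinv_vanishes T_vanishes] lone_def)
  moreover have "{0..n} = insert n {0..n - 1}"
    using n by auto
  ultimately have "Tinv n y ** T 0 y = - (\<Sum>i\<in>{0..n - 1}. Tinv i y ** T (n - i) y)"
    by (simp add: eq_neg_iff_add_eq_0)
  then have "Tinv n y ** T 0 y ** Tinv 0 y = - (\<Sum>i\<in>{0..n - 1}. Tinv i y ** T (n - i) y) ** Tinv 0 y"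
    by simp
  then show ?thesis
    by (simp add: T0_Tinv0[OF y] flip: matrix_mul_assoc)
qed

lemma Tinv_holo: "mholo_on U (Tinv k)"
proof -
  have Tinv0: "mholo_on U (Tinv 0)"
    by (rule mholo_matrix_inverse[OF open_U T_holo T0_Tinv0])
  have nonneg: "mholo_on U (Tinv (int n))" for n
  proof (induction n rule: less_induct)
    case (less n)
    show ?case
    proof (cases "n = 0")
      case True
      then show ?thesis using Tinv0 by simp
    next
      case False
      have "mholo_on U (\<lambda>y. - (\<Sum>i\<in>{0..int n - 1}. Tinv i y ** T (int n - i) y) ** Tinv 0 y)"
      proof (intro mholo_mult mholo_uminus mholo_sum Tinv0 T_holo finite_atLeastAtMost_int)
        fix i assume "i \<in> {0..int n - 1}"
        then show "mholo_on U (Tinv i)"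
          using less[of "nat i"] by (simp add: nat_less_iff)
      qed
      then show ?thesis
        by (rule mholo_cong[OF open_U]) (use Tinv_recursion False in auto)
    qed
  qed
  show ?thesis
  proof (cases "k < 0")
    case True
    then have "Tinv k = (\<lambda>y. 0)"
      using vanishes_belowD[OF Tinv_vanishes] by auto
    then show ?thesis by (simp add: mholo_const)
  next
    case False
    then show ?thesis using nonneg[of "nat k"] by simp
  qed
qed

lemma vanishes_below_gauge: "vanishes_below (-1) (\<lambda>k y. pdser a T k y - lmul (cser C a) T k y)"
  using vanishes_below_mono[OF vanishes_below_pdser[OF T_vanishes]]
    vanishes_below_lmul[OF vanishes_below_cser T_vanishes]
  by (intro vanishes_below_diff) simp_all

lemma vanishes_below_dressed: "vanishes_below p X \<Longrightarrow> vanishes_below p (lmul (lmul Tinv X) T)"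
  using vanishes_below_lmul[OF vanishes_below_lmul[OF Tinv_vanishes] T_vanishes] by simp

lemma mholo_dressed:
  "vanishes_below p X \<Longrightarrow> (\<And>k. mholo_on U (X k)) \<Longrightarrow> mholo_on U (lmul (lmul Tinv X) T k)"
  using vanishes_below_lmul[OF Tinv_vanishes]
  by (intro mholo_lmul[OF _ T_vanishes _ T_holo] mholo_lmul[OF Tinv_vanishes _ Tinv_holo]) auto

lemma laurent_T_Tinv: "y \<in> U \<Longrightarrow> laurent_at T y * laurent_at Tinv y = 1"
  using laurent_at_cong[of "lmul T Tinv" y lone] T_Tinv
  by (simp add: laurent_at_lmul[OF T_vanishes Tinv_vanishes] laurent_at_lone)

lemma laurent_Tinv_T: "y \<in> U \<Longrightarrow> laurent_at Tinv y * laurent_at T y = 1"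
  using laurent_at_cong[of "lmul Tinv T" y lone] Tinv_T
  by (simp add: laurent_at_lmul[OF Tinv_vanishes T_vanishes] laurent_at_lone)

lemma laurent_gauge:
  assumes "y \<in> U"
  shows "laurent_at Tinv y * (laurent_at (pdser a T) y - laurent_at (cser C a) y * laurent_at T y)
    = laurent_at (H a) y"
proof -
  have "laurent_at (lmul Tinv (\<lambda>k y. pdser a T k y - lmul (cser C a) T k y)) y = laurent_at (H a) y"
    by (rule laurent_at_cong) (rule gauge[OF assms])
  then show ?thesis
    by (simp add: laurent_at_lmul[OF Tinv_vanishes vanishes_below_gauge]
        laurent_at_diff[OF vanishes_below_pdser[OF T_vanishes] vanishes_below_lmul[OF vanishes_below_cser T_vanishes]]
        laurent_at_lmul[OF vanishes_below_cser T_vanishes])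
qed

lemma laurent_pdser_Tinv:
  assumes y: "y \<in> U"
  shows "laurent_at (pdser a Tinv) y * laurent_at T y + laurent_at Tinv y * laurent_at (pdser a T) y = 0"
proof -
  have TT: "vanishes_below 0 (pdser a (lmul Tinv T))"
    using vanishes_below_pdser[OF vanishes_below_lmul[OF Tinv_vanishes T_vanishes]] by simp
  have "pdser a (lmul Tinv T) k y = pdm a (\<lambda>y. lone k y) y" for k
    unfolding pdser_def by (rule pdm_cong[OF open_U y]) (rule Tinv_T)
  then have "laurent_at (pdser a (lmul Tinv T)) y = 0"
    by (intro laurent_eqI) (simp add: lcoeff_laurent_at[OF TT] lone_def pdm_const)
  then show ?thesis
    by (simp add: laurent_at_pdser_lmul[OF Tinv_vanishes T_vanishes Tinv_holo T_holo y])
qed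

lemma laurent_dressed_derivative:
  fixes a :: 'n
  assumes X: "vanishes_below p X" "\<And>k. mholo_on U (X k)" and y: "y \<in> U"
  defines "Y \<equiv> lmul (lmul Tinv X) T"
    and "Z \<equiv> \<lambda>k y. pdser a X k y - (lmul (cser C a) X k y - lmul X (cser C a) k y)"
  shows "laurent_at (pdser a Y) y = laurent_at Y y * laurent_at (H a) y - laurent_at (H a) y * laurent_at Y y
    + laurent_at Tinv y * laurent_at Z y * laurent_at T y"
proof -
  let ?L = "\<lambda>S. laurent_at S y"
  have TX: "vanishes_below p (lmul Tinv X)"
    using vanishes_below_lmul[OF Tinv_vanishes X(1)] by simp
  have CX: "vanishes_below (p - 1) (lmul (cser C a) X)" "vanishes_below (p - 1) (lmul X (cser C a))"
    using vanishes_below_lmul[OF vanishes_below_cser X(1)] vanishes_below_lmul[OF X(1) vanishes_below_cser]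
    by (simp_all add: algebra_simps)
  have Z: "?L Z = ?L (pdser a X) - (?L (cser C a) * ?L X - ?L X * ?L (cser C a))"
    unfolding Z_def
    by (simp add: laurent_at_diff[OF vanishes_below_pdser[OF X(1)] vanishes_below_diff[OF CX]]
        laurent_at_diff[OF CX] laurent_at_lmul[OF vanishes_below_cser X(1)]
        laurent_at_lmul[OF X(1) vanishes_below_cser])
  have "?L (pdser a Y)
      = ?L (pdser a Tinv) * ?L X * ?L T + ?L Tinv * ?L (pdser a X) * ?L T + ?L Tinv * ?L X * ?L (pdser a T)"
    unfolding Y_def
    by (simp add: laurent_at_pdser_lmul[OF TX T_vanishes mholo_lmul[OF Tinv_vanishes X(1) Tinv_holo X(2)]
          T_holo y] laurent_at_pdser_lmul[OF Tinv_vanishes X(1) Tinv_holo X(2) y]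
        laurent_at_lmul[OF Tinv_vanishes X(1)] algebra_simps)
  also have "\<dots> = ?L Y * ?L (H a) - ?L (H a) * ?L Y + ?L Tinv * ?L Z * ?L T"
    using conjugate_derivative[OF laurent_Tinv_T[OF y] laurent_T_Tinv[OF y] laurent_gauge[OF y]
        laurent_pdser_Tinv[OF y] Z[symmetric]]
    by (simp add: Y_def laurent_at_lmul[OF TX T_vanishes] laurent_at_lmul[OF Tinv_vanishes X(1)])
  finally show ?thesis .
qed

text \<open>The hypothesis on \<open>X\<close> confines the error term \<open>T\<inverse> Z T\<close> to powers \<open>hbar^k\<close> with \<open>k \<ge> -1\<close>.\<close>

lemma dressed_flow:
  assumes X: "vanishes_below p X" "\<And>k. mholo_on U (X k)"
    and commutator: "\<And>k y. k \<noteq> -1 \<Longrightarrow> y \<in> U \<Longrightarrow>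
      pdser a X k y - (lmul (cser C a) X k y - lmul X (cser C a) k y) = 0"
    and y: "y \<in> U" and k: "k \<le> -2"
  shows "pdm a (lmul (lmul Tinv X) T k) y
    = lmul (lmul (lmul Tinv X) T) (H a) k y - lmul (H a) (lmul (lmul Tinv X) T) k y"
proof -
  define Y where "Y = lmul (lmul Tinv X) T"
  define Z where "Z = (\<lambda>k y. pdser a X k y - (lmul (cser C a) X k y - lmul X (cser C a) k y))"
  let ?L = "\<lambda>S. laurent_at S y"
  have Y: "vanishes_below p Y"
    unfolding Y_def by (rule vanishes_below_dressed[OF X(1)])
  have "vanishes_below (p - 1) Z"
    unfolding Z_def using vanishes_below_lmul[OF vanishes_below_cser X(1)]
      vanishes_below_lmul[OF X(1) vanishes_below_cser] vanishes_below_pdser[OF X(1)]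
    by (auto simp: vanishes_below_def)
  then have "\<forall>j < -1. lcoeff (?L Z) j = 0"
    using commutator y by (simp add: lcoeff_laurent_at Z_def)
  then have "lcoeff (?L Tinv * ?L Z * ?L T) k = 0"
    using lcoeff_mult_eq_0[of 0 "?L Tinv" "-1" "?L Z"] k
      laurent_at_vanishes_below[OF Tinv_vanishes] laurent_at_vanishes_below[OF T_vanishes]
    by (intro lcoeff_mult_eq_0[of "-1" _ 0]) auto
  then have "lcoeff (?L (pdser a Y)) k = lcoeff (?L Y * ?L (H a) - ?L (H a) * ?L Y) k"
    using laurent_dressed_derivative[OF X y, of a] by (simp add: Y_def Z_def)
  then show ?thesis
    by (simp add: Y_def[symmetric] lcoeff_laurent_at[OF vanishes_below_pdser[OF Y]] lcoeff_laurent_at[OF Y]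
        lcoeff_laurent_at[OF H_vanishes] lmul_eq_cauchy_mult lcoeff_mult pdser_def)
qed

text \<open>\<open>T\<close>, \<open>T\<inverse>\<close> and \<open>Y - B\<close> contain no negative powers of \<open>hbar\<close>, so conjugating \<open>Y - B\<close> back
  does not contribute to the negative part.\<close>

lemma dressed_truncation:
  assumes X: "vanishes_below p X" and B: "vanishes_below q B"
    and B_eq: "\<And>k. k < 0 \<Longrightarrow> B k y = lmul (lmul Tinv X) T k y"
    and y: "y \<in> U" and k: "k < 0"
  shows "X k y = lmul (lmul T B) Tinv k y"
proof -
  define Y where "Y = lmul (lmul Tinv X) T"
  let ?L = "\<lambda>S. laurent_at S y"
  have Y: "vanishes_below p Y"
    unfolding Y_def by (rule vanishes_below_dressed[OF X])
  have TBT: "vanishes_below q (lmul (lmul T B) Tinv)"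
    using vanishes_below_lmul[OF vanishes_below_lmul[OF T_vanishes B] Tinv_vanishes] by simp
  have "?L X = ?L T * ?L Tinv * ?L X * (?L T * ?L Tinv)"
    using laurent_T_Tinv[OF y] by simp
  also have "\<dots> = ?L T * ?L Y * ?L Tinv"
    by (simp add: Y_def laurent_at_lmul[OF vanishes_below_lmul[OF Tinv_vanishes X] T_vanishes]
        laurent_at_lmul[OF Tinv_vanishes X] mult.assoc)
  also have "\<dots> = ?L (lmul (lmul T B) Tinv) + ?L T * (?L Y - ?L B) * ?L Tinv"
    by (simp add: laurent_at_lmul[OF vanishes_below_lmul[OF T_vanishes B] Tinv_vanishes]
        laurent_at_lmul[OF T_vanishes B] algebra_simps)
  finally have "lcoeff (?L X) k
      = lcoeff (?L (lmul (lmul T B) Tinv)) k + lcoeff (?L T * (?L Y - ?L B) * ?L Tinv) k"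
    by simp
  moreover have "lcoeff (?L T * (?L Y - ?L B) * ?L Tinv) k = 0"
  proof (rule lcoeff_mult_eq_0)
    have "\<forall>j<0. lcoeff (?L Y - ?L B) j = 0"
      using B_eq[folded Y_def] by (simp add: lcoeff_laurent_at[OF Y] lcoeff_laurent_at[OF B])
    then show "\<forall>j<0 + 0. lcoeff (?L T * (?L Y - ?L B)) j = 0"
      using lcoeff_mult_eq_0 laurent_at_vanishes_below[OF T_vanishes] by blast
  qed (use laurent_at_vanishes_below[OF Tinv_vanishes] k in auto)
  ultimately show ?thesis
    by (simp add: lcoeff_laurent_at[OF X] lcoeff_laurent_at[OF TBT])
qed

lemma H_leading: "y \<in> U \<Longrightarrow> H a (-1) y = - (Tinv 0 y ** C a y ** T 0 y)"
proof -
  assume y: "y \<in> U"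
  have "H a (-1) y = Tinv 0 y ** (pdser a T (-1) y - lmul (cser C a) T (-1) y)"
    using gauge[OF y, of a "-1"] by (simp add: lmul_eq_interval[OF Tinv_vanishes vanishes_below_gauge])
  also have "pdser a T (-1) y = 0"
    using vanishes_belowD[OF vanishes_below_pdser[OF T_vanishes]] by simp
  also have "lmul (cser C a) T (-1) y = C a y ** T 0 y"
    by (simp add: lmul_eq_interval[OF vanishes_below_cser T_vanishes] cser_def)
  finally show ?thesis
    by (simp add: matrix_mul_uminus_right matrix_mul_assoc)
qed

lemma H_leading_separates:
  assumes "semisimple U C" "y \<in> U" "r \<noteq> s"
  shows "\<exists>a. H a (-1) y $ r $ r \<noteq> H a (-1) y $ s $ s"
proof -
  obtain P :: "complex^'n^'n" and lam where P: "invertible P" "\<And>a. C a y ** P = P ** diagm (lam a)"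
    and sep: "\<And>i j. i \<noteq> j \<Longrightarrow> \<exists>a. lam a $ i \<noteq> lam a $ j"
    using assms(1)[unfolded semisimple_def, rule_format, OF assms(2)] by (elim exE conjE) blast
  obtain P' where P': "P ** P' = mat 1" "P' ** P = mat 1"
    using P(1) unfolding invertible_def by (elim exE conjE)
  define D where "D a = Tinv 0 y ** C a y ** T 0 y" for a
  have "invertible (P' ** T 0 y)"
    using P' T0_Tinv0[OF assms(2)] Tinv0_T0[OF assms(2)]
    by (intro invertible_mult) (auto simp: invertible_def)
  moreover have "is_diag (D a)" for a
    using H_diag[OF assms(2), of a "-1"] by (simp add: H_leading[OF assms(2)] D_def)
  moreover have "(P' ** T 0 y) ** D a = diagm (lam a) ** (P' ** T 0 y)" for a
    unfolding D_def by (rule diagonalisation_conjugate[OF P'(2,1) T0_Tinv0[OF assms(2)] P(2)])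
  ultimately obtain a where "D a $ r $ r \<noteq> D a $ s $ s"
    using intertwined_diagonal_entries_separate sep assms(3) by metis
  then show ?thesis
    by (auto simp: H_leading[OF assms(2)] D_def)
qed

end

lemma negser_coefficients:
  assumes "vanishes_below (- int m) Y" "k < 0"
  shows "negser m (\<lambda>j. Y (- int j)) k = Y k"
  using assms by (auto simp: negser_def vanishes_below_def fun_eq_iff)

theorem mainTheorem7:
  fixes U :: "(complex^'n) set"
    and C :: "'n \<Rightarrow> complex^'n \<Rightarrow> complex^'n^'n"
    and eta :: "complex^'n^'n" and e :: 'n
    and T Tinv :: "'n mser"
    and m :: nat and A :: "nat \<Rightarrow> complex^'n \<Rightarrow> complex^'n^'n"
  assumes "open U" and "connected U"
    and "frobenius U C eta e"
    and "L_commute U C"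
    and "semisimple U C"
    and "dressing U C T Tinv"
    and "\<forall>j\<in>{1..m}. mholo_on U (A j)"
    and "\<forall>a. \<forall>k. k \<noteq> -1 \<longrightarrow> (\<forall>x\<in>U.
           pdser a (negser m A) k x
             - (lmul (cser C a) (negser m A) k x - lmul (negser m A) (cser C a) k x) = 0)"
  shows "\<exists>b :: nat \<Rightarrow> complex^'n \<Rightarrow> complex^'n^'n.
           (\<forall>j\<in>{1..m}. \<forall>x\<in>U. is_diag (b j x)) \<and>
           (\<forall>k \<le> -1. \<forall>x\<in>U. negser m A k x = lmul (lmul T (negser m b)) Tinv k x) \<and>
           (\<forall>j. 1 < j \<and> j \<le> m \<longrightarrow> (\<exists>c. \<forall>x\<in>U. b j x = c))"
proof -
  obtain H where "dressed_frame U C T Tinv H"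
    using dressing_imp_dressed_frame[OF assms(1,6)] .
  then interpret dressed_frame U C T Tinv H .
  define Y where "Y = lmul (lmul Tinv (negser m A)) T"
  have X: "vanishes_below (- int m) (negser m A)" "\<And>k. mholo_on U (negser m A k)"
    using vanishes_below_negser mholo_negser assms(7) by blast+
  have Y: "vanishes_below (- int m) Y" "\<And>k. mholo_on U (Y k)"
    unfolding Y_def using vanishes_below_dressed[OF X(1)] mholo_dressed[OF X] by blast+
  have flow: "pdm a (Y k) y = lmul Y (H a) k y - lmul (H a) Y k y" if "y \<in> U" "k \<le> -2" for a k y
    unfolding Y_def using dressed_flow[OF X _ that] assms(8) by blast
  note separates = H_leading_separates[OF assms(5)]
  define b where "b j = Y (- int j)" for j
  show ?thesis
  proof (intro exI[of _ b] conjI ballI allI impI)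
    fix j x assume "j \<in> {1..m}" "x \<in> U"
    then show "is_diag (b j x)"
      unfolding b_def using commutator_flow_diagonal[OF open_U Y(1) H_vanishes H_diag flow separates] by simp
  next
    fix k :: int and x assume "k \<le> -1" "x \<in> U"
    then show "negser m A k x = lmul (lmul T (negser m b)) Tinv k x"
      using dressed_truncation[OF X(1) vanishes_below_negser] negser_coefficients[OF Y(1)]
      unfolding b_def Y_def by simp
  next
    fix j :: nat assume "1 < j \<and> j \<le> m"
    then show "\<exists>c. \<forall>x\<in>U. b j x = c"
      unfolding b_def
      using commutator_flow_constant[OF open_U Y(1) H_vanishes H_diag flow separates assms(2) Y(2)] by simp
  qed
qed

end
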